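(* Let $(P,\leqslant)$ be a conditionally-complete interpolating poset, let $P^* := \{x \in P : \exists\, y \in P,\ y \ll x\}$, and let $Q$ be a kernel retract of $P^*$. Then $Q$ is a conditionally-complete subposet of $P$. Moreover, for every nonempty subset $D$ of $Q$ bounded above in $P$, the supremum of $D$ in $Q$ exists and equals its supremum $\bigvee D$ in $P$.
   Context: A poset is conditionally-complete if every nonempty subset bounded above has a supremum. A nonempty subset $D$ is directed if any two elements of $D$ have an upper bound in $D$. For a poset $R$ and $x,y \in R$, $x \ll_R y$ ($x$ way-below $y$ in $R$) means: for every directed subset $D$ of $R$ bounded above in $R$ with supremum $d_0$ in $R$, $y \leqslant d_0$ implies $x \leqslant d$ for some $d \in D$; write $\ll$ for $\ll_P$. $P$ is interpolating if whenever $x \ll y$ there is $z$ with $x \ll z \ll y$. A kernel on $P^*$ is a map $j: P^* \to P^*$ with $j(j(x)) = j(x)$, $x \leqslant y \Rightarrow j(x) \leqslant j(y)$, and $j(x) \leqslant x$ for all $x,y \in P^*$. A kernel retraction is a map $k: P^* \to Q$, where $Q = \{x \in P^* : k(x) = x\}$, such that $x \mapsto k(x)$ is a kernel on $P^*$ and for every directed subset $D$ of $P^*$ bounded above, $k(\bigvee D) = \bigvee_Q k(D)$ (supremum in $Q$); such a $Q$ is called a kernel retract of $P^*$. A subset $Q \subseteq P$ (with the induced order) is a subposet of $P$ if for all $x,y \in Q$: $x \ll_Q y \iff x \ll y$. *)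

theory Defs
  imports Main
begin

text \<open>The poset P is the whole type 'a with its partial order; subsets carry the induced order.\<close>

definition upper_bound_of :: "'a::order set \<Rightarrow> 'a \<Rightarrow> bool" where
  "upper_bound_of D u \<longleftrightarrow> (\<forall>d\<in>D. d \<le> u)"

definition bounded_above_in :: "'a::order set \<Rightarrow> 'a set \<Rightarrow> bool" where
  "bounded_above_in R D \<longleftrightarrow> (\<exists>u\<in>R. upper_bound_of D u)"

definition is_sup_in :: "'a::order set \<Rightarrow> 'a set \<Rightarrow> 'a \<Rightarrow> bool" where
  "is_sup_in R D s \<longleftrightarrow> s \<in> R \<and> upper_bound_of D s \<and> (\<forall>u\<in>R. upper_bound_of D u \<longrightarrow> s \<le> u)"

definition directed :: "'a::order set \<Rightarrow> bool" where
  "directed D \<longleftrightarrow> D \<noteq> {} \<and> (\<forall>x\<in>D. \<forall>y\<in>D. \<exists>z\<in>D. x \<le> z \<and> y \<le> z)"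

definition cond_complete_in :: "'a::order set \<Rightarrow> bool" where
  "cond_complete_in R \<longleftrightarrow>
     (\<forall>D. D \<subseteq> R \<and> D \<noteq> {} \<and> bounded_above_in R D \<longrightarrow> (\<exists>s. is_sup_in R D s))"

definition way_below_in :: "'a::order set \<Rightarrow> 'a \<Rightarrow> 'a \<Rightarrow> bool" where
  "way_below_in R x y \<longleftrightarrow>
     (\<forall>D d0. D \<subseteq> R \<and> directed D \<and> bounded_above_in R D \<and> is_sup_in R D d0 \<and> y \<le> d0
        \<longrightarrow> (\<exists>d\<in>D. x \<le> d))"

abbreviation way_below :: "'a::order \<Rightarrow> 'a \<Rightarrow> bool" where
  "way_below x y \<equiv> way_below_in UNIV x y"

definition interpolating :: "'a::order itself \<Rightarrow> bool" where
  "interpolating _ \<longleftrightarrow> (\<forall>x y::'a. way_below x y \<longrightarrow> (\<exists>z. way_below x z \<and> way_below z y))"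

definition Pstar :: "'a::order set" where
  "Pstar = {x. \<exists>y. way_below y x}"

definition kernel_on :: "'a::order set \<Rightarrow> ('a \<Rightarrow> 'a) \<Rightarrow> bool" where
  "kernel_on S j \<longleftrightarrow> (\<forall>x\<in>S. j x \<in> S) \<and> (\<forall>x\<in>S. j (j x) = j x)
     \<and> (\<forall>x\<in>S. \<forall>y\<in>S. x \<le> y \<longrightarrow> j x \<le> j y) \<and> (\<forall>x\<in>S. j x \<le> x)"

definition kernel_retraction :: "('a::order \<Rightarrow> 'a) \<Rightarrow> bool" where
  "kernel_retraction k \<longleftrightarrow> kernel_on Pstar k \<and>
     (\<forall>D s. D \<subseteq> Pstar \<and> directed D \<and> bounded_above_in Pstar D \<and> is_sup_in Pstar D s
        \<longrightarrow> is_sup_in {x\<in>Pstar. k x = x} (k ` D) (k s))"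

definition kernel_retract :: "'a::order set \<Rightarrow> bool" where
  "kernel_retract Q \<longleftrightarrow> (\<exists>k. kernel_retraction k \<and> Q = {x\<in>Pstar. k x = x})"

definition subposet :: "'a::order set \<Rightarrow> bool" where
  "subposet Q \<longleftrightarrow> (\<forall>x\<in>Q. \<forall>y\<in>Q. way_below_in Q x y \<longleftrightarrow> way_below x y)"

end

theory Submission
  imports Defs
begin

text \<open>A supremum in P of elements fixed by the kernel k is again fixed: k s is an upper bound
  below s. So suprema in Q and in P agree, which gives conditional completeness and one
  direction of the way-below comparison. Conversely, if x is way below y in Q and D is
  directed in P with supremum d0 above y, interpolation puts an element d of D in P*; the
  tail of D above d is directed in P* with supremum d0, so its image under k is directed in
  Q with supremum k d0 above k y = y. Hence x lies below some k e, and k e \<le> e.\<close>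

lemma way_below_in_upward: "way_below_in R w z \<Longrightarrow> z \<le> d \<Longrightarrow> way_below_in R w d"
  unfolding way_below_in_def by (meson order_trans)

lemma Pstar_upward_closed: "x \<in> Pstar \<Longrightarrow> x \<le> y \<Longrightarrow> y \<in> Pstar"
  unfolding Pstar_def using way_below_in_upward by blast

lemma is_sup_in_unique: "is_sup_in R D s \<Longrightarrow> is_sup_in R D t \<Longrightarrow> s = t"
  unfolding is_sup_in_def by (meson order_antisym)

lemma bounded_above_in_mono: "bounded_above_in R D \<Longrightarrow> R \<subseteq> S \<Longrightarrow> bounded_above_in S D"
  unfolding bounded_above_in_def by blast

lemma bounded_above_in_if_is_sup_in: "is_sup_in R D s \<Longrightarrow> bounded_above_in R D"
  unfolding bounded_above_in_def is_sup_in_def by blast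

lemma way_below_inD:
  assumes "way_below_in R x y" and "D \<subseteq> R" and "directed D" and "is_sup_in R D d0"
    and "y \<le> d0"
  shows "\<exists>d\<in>D. x \<le> d"
  using assms bounded_above_in_if_is_sup_in unfolding way_below_in_def by blast

lemma kernel_onD:
  assumes "kernel_on S j" and "x \<in> S"
  shows kernel_on_closed: "j x \<in> S" and kernel_on_idem: "j (j x) = j x"
    and kernel_on_deflationary: "j x \<le> x"
    and kernel_on_mono: "y \<in> S \<Longrightarrow> x \<le> y \<Longrightarrow> j x \<le> j y"
  using assms unfolding kernel_on_def by blast+

lemma directed_image:
  assumes dir: "directed D" and mono: "\<And>a b. a \<in> D \<Longrightarrow> b \<in> D \<Longrightarrow> a \<le> b \<Longrightarrow> f a \<le> f b"
  shows "directed (f ` D)"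
  unfolding directed_def
proof (intro conjI ballI)
  show "f ` D \<noteq> {}" using dir unfolding directed_def by blast
next
  fix a b assume "a \<in> f ` D" "b \<in> f ` D"
  then obtain a' b' where "a' \<in> D" "b' \<in> D" "a = f a'" "b = f b'" by blast
  moreover obtain c where "c \<in> D" "a' \<le> c" "b' \<le> c"
    using dir calculation unfolding directed_def by blast
  ultimately show "\<exists>z\<in>f ` D. a \<le> z \<and> b \<le> z" using mono by blast
qed

lemma directed_tail:
  assumes dir: "directed D" and "d \<in> D"
  shows "directed {e\<in>D. d \<le> e}"
  unfolding directed_def
proof (intro conjI ballI)
  show "{e\<in>D. d \<le> e} \<noteq> {}" using \<open>d \<in> D\<close> by blast
next
  fix a b assume "a \<in> {e\<in>D. d \<le> e}" "b \<in> {e\<in>D. d \<le> e}"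
  then obtain c where "c \<in> D" "a \<le> c" "b \<le> c" "d \<le> a"
    using dir unfolding directed_def by blast
  then show "\<exists>c\<in>{e\<in>D. d \<le> e}. a \<le> c \<and> b \<le> c" by (blast intro: order_trans)
qed

lemma is_sup_in_tail:
  assumes sup: "is_sup_in UNIV D s" and dir: "directed D" and "d \<in> D" and "s \<in> R"
  shows "is_sup_in R {e\<in>D. d \<le> e} s"
  unfolding is_sup_in_def
proof (intro conjI ballI impI)
  show "s \<in> R" by fact
  show "upper_bound_of {e\<in>D. d \<le> e} s"
    using sup unfolding is_sup_in_def upper_bound_of_def by blast
next
  fix u assume "upper_bound_of {e\<in>D. d \<le> e} u"
  have "upper_bound_of D u"
    unfolding upper_bound_of_def
  proof
    fix a assume "a \<in> D"
    then obtain c where "c \<in> D" "a \<le> c" "d \<le> c"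
      using dir \<open>d \<in> D\<close> unfolding directed_def by blast
    then show "a \<le> u" using \<open>upper_bound_of {e\<in>D. d \<le> e} u\<close>
      unfolding upper_bound_of_def by (blast intro: order_trans)
  qed
  then show "s \<le> u" using sup unfolding is_sup_in_def by blast
qed

lemma directed_meets_Pstar:
  assumes "interpolating TYPE('a::order)" and "(y::'a) \<in> Pstar"
    and "directed D" and "is_sup_in UNIV D d0" and "y \<le> d0"
  shows "\<exists>d\<in>D. d \<in> Pstar"
proof -
  obtain w where "way_below w y" using \<open>y \<in> Pstar\<close> unfolding Pstar_def by blast
  then obtain z where "way_below w z" and "way_below z y"
    using assms(1) unfolding interpolating_def by blast
  obtain d where "d \<in> D" and "z \<le> d"
    using way_below_inD[OF \<open>way_below z y\<close> _ assms(3-5)] by blast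
  moreover have "z \<in> Pstar" using \<open>way_below w z\<close> unfolding Pstar_def by blast
  ultimately show ?thesis using Pstar_upward_closed by blast
qed

lemma is_sup_in_kernel_fixpoints:
  assumes ker: "kernel_on Pstar k" and D: "D \<subseteq> {x\<in>Pstar. k x = x}" "D \<noteq> {}"
    and s: "is_sup_in UNIV D s"
  shows "is_sup_in {x\<in>Pstar. k x = x} D s"
proof -
  obtain d where "d \<in> D" using D by blast
  then have "d \<le> s" using s unfolding is_sup_in_def upper_bound_of_def by blast
  then have sP: "s \<in> Pstar" using Pstar_upward_closed \<open>d \<in> D\<close> D by blast
  have "upper_bound_of D (k s)"
    unfolding upper_bound_of_def
  proof
    fix e assume "e \<in> D"
    then have "e \<le> s" "e \<in> Pstar" "k e = e"
      using s D unfolding is_sup_in_def upper_bound_of_def by auto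
    then show "e \<le> k s" using kernel_on_mono[OF ker] sP by metis
  qed
  then have "s \<le> k s" using s unfolding is_sup_in_def by blast
  moreover have "k s \<le> s" using kernel_on_deflationary[OF ker sP] .
  ultimately show ?thesis using s sP unfolding is_sup_in_def by auto
qed

lemma way_below_in_if_sups_agree:
  assumes sups: "\<And>D. D \<subseteq> Q \<Longrightarrow> D \<noteq> {} \<Longrightarrow> bounded_above_in UNIV D \<Longrightarrow>
      \<exists>s. is_sup_in Q D s \<and> is_sup_in UNIV D s"
    and wb: "way_below x y"
  shows "way_below_in Q x y"
  unfolding way_below_in_def
proof (intro allI impI)
  fix D d0 assume "D \<subseteq> Q \<and> directed D \<and> bounded_above_in Q D \<and> is_sup_in Q D d0 \<and> y \<le> d0"
  then have D: "D \<subseteq> Q" "directed D" "bounded_above_in Q D" and d0: "is_sup_in Q D d0" "y \<le> d0"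
    by auto
  have "D \<noteq> {}" using D(2) unfolding directed_def by blast
  then obtain s where s: "is_sup_in Q D s" "is_sup_in UNIV D s"
    using sups[OF D(1)] bounded_above_in_mono[OF D(3)] by blast
  then have "s = d0" using is_sup_in_unique d0(1) by blast
  then show "\<exists>d\<in>D. x \<le> d" using way_below_inD[OF wb _ D(2) s(2)] d0(2) by blast
qed

lemma way_below_in_kernel_fixpoints_imp_way_below:
  assumes interp: "interpolating TYPE('a::order)" and kr: "kernel_retraction k"
    and Q: "Q = {x\<in>Pstar. k x = x}" and "(y::'a) \<in> Q" and wb: "way_below_in Q x y"
  shows "way_below x y"
  unfolding way_below_in_def
proof (intro allI impI)
  fix D d0 assume H: "D \<subseteq> UNIV \<and> directed D \<and> bounded_above_in UNIV D \<and> is_sup_in UNIV D d0 \<and> y \<le> d0"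
  have ker: "kernel_on Pstar k" using kr unfolding kernel_retraction_def by blast
  have yP: "y \<in> Pstar" "k y = y" using \<open>y \<in> Q\<close> Q by auto
  obtain d where "d \<in> D" "d \<in> Pstar" using directed_meets_Pstar[OF interp yP(1)] H by blast
  define T where "T = {e\<in>D. d \<le> e}"
  have TP: "T \<subseteq> Pstar" unfolding T_def using Pstar_upward_closed \<open>d \<in> Pstar\<close> by blast
  have dirT: "directed T" unfolding T_def using directed_tail H \<open>d \<in> D\<close> by blast
  have "d \<le> d0" using H \<open>d \<in> D\<close> unfolding is_sup_in_def upper_bound_of_def by blast
  then have d0P: "d0 \<in> Pstar" using Pstar_upward_closed \<open>d \<in> Pstar\<close> by blast
  have supT: "is_sup_in Pstar T d0" unfolding T_def using is_sup_in_tail H \<open>d \<in> D\<close> d0P by blast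
  have supkT: "is_sup_in Q (k ` T) (k d0)"
    using kr TP dirT supT Q bounded_above_in_if_is_sup_in unfolding kernel_retraction_def by blast
  have "k ` T \<subseteq> Q" using TP kernel_onD[OF ker] Q by auto
  moreover have "directed (k ` T)"
    using directed_image[OF dirT] TP kernel_on_mono[OF ker] by (meson subsetD)
  moreover have "y \<le> k d0" using kernel_on_mono[OF ker yP(1) d0P] yP(2) H by simp
  ultimately obtain e where "e \<in> T" "x \<le> k e"
    using way_below_inD[OF wb _ _ supkT] by blast
  moreover have "k e \<le> e" using kernel_on_deflationary[OF ker] \<open>e \<in> T\<close> TP by blast
  ultimately show "\<exists>d\<in>D. x \<le> d" unfolding T_def by (blast intro: order_trans)
qed

theorem lemma2p4:
  fixes Q :: "'a::order set"
  assumes "cond_complete_in (UNIV :: 'a set)"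
    and "interpolating TYPE('a)"
    and "kernel_retract Q"
  shows "cond_complete_in Q \<and> subposet Q \<and>
    (\<forall>D. D \<subseteq> Q \<and> D \<noteq> {} \<and> bounded_above_in UNIV D \<longrightarrow>
       (\<exists>s. is_sup_in Q D s \<and> is_sup_in UNIV D s))"
proof -
  obtain k where kr: "kernel_retraction k" and Q: "Q = {x\<in>Pstar. k x = x}"
    using assms(3) unfolding kernel_retract_def by blast
  have ker: "kernel_on Pstar k" using kr unfolding kernel_retraction_def by blast
  have sups: "\<exists>s. is_sup_in Q D s \<and> is_sup_in UNIV D s"
    if "D \<subseteq> Q" "D \<noteq> {}" "bounded_above_in UNIV D" for D
    using assms(1) that is_sup_in_kernel_fixpoints[OF ker] Q unfolding cond_complete_in_def by blast
  have "cond_complete_in Q"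
    unfolding cond_complete_in_def
  proof (intro allI impI)
    fix D assume "D \<subseteq> Q \<and> D \<noteq> {} \<and> bounded_above_in Q D"
    then show "\<exists>s. is_sup_in Q D s" using sups bounded_above_in_mono[of Q D UNIV] by blast
  qed
  moreover have "subposet Q"
    unfolding subposet_def
    using way_below_in_if_sups_agree[OF sups]
      way_below_in_kernel_fixpoints_imp_way_below[OF assms(2) kr Q] by blast
  ultimately show ?thesis using sups by blast
qed

end
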